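(* Let $(x,y)$ be a feasible solution of BLP1. Define the $m\times n$ 0-1 matrix $x^*$ by choosing, for each $i\in M$, one arbitrary $j\in N$ minimizing $c_{ij}+\sum_{k\in M,\ell\in N}q_{ijk\ell}y_{k\ell}$ and setting $x^*_{ij}=1$ for that $j$ and $x^*_{ij'}=0$ otherwise; then define the $m\times n$ 0-1 matrix $y^*$ by choosing, for each $j\in N$, one arbitrary $i\in M$ minimizing $d_{ij}+\sum_{k\in M,\ell\in N}q_{k\ell ij}x^*_{k\ell}$ and setting $y^*_{ij}=1$ for that $i$ and $y^*_{i'j}=0$ otherwise (procedure RxOy). Define RyOx symmetrically: first $y^*$ with, for each $j$, $y^*_{ij}=1$ for one $i$ minimizing $d_{ij}+\sum_{k,\ell}q_{k\ell ij}x_{k\ell}$, then $x^*$ with, for each $i$, $x^*_{ij}=1$ for one $j$ minimizing $c_{ij}+\sum_{k,\ell}q_{ijk\ell}y^*_{k\ell}$. If $(x^*,y^* )$ is obtained from $(x,y)$ by RxOy or by RyOx, then $(x^*,y^* )$ is feasible for BQAP1 and $f_1(x^*,y^* )\le f_1(x,y)$. The analogous statement holds for BLP2 and BQAP2 (with the RxOy and RyOx procedures adapted to the BQAP2 dimensions): $f_2(x^*,y^* )\le f_2(x,y)$.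
   Context: $M=\{1,\dots,m\}$, $N=\{1,\dots,n\}$. BQAP1: data $Q=(q_{ijk\ell})$ ($m\times n\times m\times n$ real array), real $m\times n$ matrices $c,d$; feasible solutions are pairs $(x,y)$ of $m\times n$ 0-1 matrices with $\sum_{j=1}^n x_{ij}=1$ for all $i\in M$ and $\sum_{i=1}^m y_{ij}=1$ for all $j\in N$; $f_1(x,y)=\sum_{i,k\in M}\sum_{j,\ell\in N} q_{ijk\ell}x_{ij}y_{k\ell}+\sum_{i\in M,j\in N}c_{ij}x_{ij}+\sum_{i\in M,j\in N}d_{ij}y_{ij}$. BLP1 is the relaxation in which the constraints $x_{ij},y_{ij}\in\{0,1\}$ are replaced by $0\le x_{ij},y_{ij}\le1$ (same equality constraints, same objective $f_1$). BQAP2: data $Q$ ($m\times m\times n\times n$ real array), real $m\times m$ matrix $c$, real $n\times n$ matrix $d$; feasible $(x,y)$: $x$ an $m\times m$ 0-1 matrix with $\sum_{j=1}^m x_{ij}=1$ for all $i\in M$, $y$ an $n\times n$ 0-1 matrix with $\sum_{i=1}^n y_{ij}=1$ for all $j\in N$; $f_2(x,y)=\sum_{i,j\in M}\sum_{k,\ell\in N} q_{ijk\ell}x_{ij}y_{k\ell}+\sum_{i,j\in M}c_{ij}x_{ij}+\sum_{i,j\in N}d_{ij}y_{ij}$; BLP2 is its relaxation with $0\le x_{ij},y_{k\ell}\le1$. For BQAP2, RxOy sets, for each $i\in M$, $x^*_{ij}=1$ for one $j\in M$ minimizing $c_{ij}+\sum_{k,\ell\in N}q_{ijk\ell}y_{k\ell}$,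 then for each $\ell\in N$, $y^*_{k\ell}=1$ for one $k\in N$ minimizing $d_{k\ell}+\sum_{i,j\in M}q_{ijk\ell}x^*_{ij}$; RyOx is symmetric. *)

theory Defs
  imports Main "HOL.Real"
begin

text \<open>Matrices are functions nat => nat => real; only indices in the ranges
  {1..m}, {1..n} matter. Q is a 4-index array.\<close>

type_synonym mat = "nat \<Rightarrow> nat \<Rightarrow> real"
type_synonym arr4 = "nat \<Rightarrow> nat \<Rightarrow> nat \<Rightarrow> nat \<Rightarrow> real"

definition is01 :: "nat \<Rightarrow> nat \<Rightarrow> mat \<Rightarrow> bool" where
  "is01 p r z \<longleftrightarrow> (\<forall>i\<in>{1..p}. \<forall>j\<in>{1..r}. z i j = 0 \<or> z i j = 1)"

definition inbox :: "nat \<Rightarrow> nat \<Rightarrow> mat \<Rightarrow> bool" where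
  "inbox p r z \<longleftrightarrow> (\<forall>i\<in>{1..p}. \<forall>j\<in>{1..r}. 0 \<le> z i j \<and> z i j \<le> 1)"

definition rows_one :: "nat \<Rightarrow> nat \<Rightarrow> mat \<Rightarrow> bool" where
  "rows_one p r z \<longleftrightarrow> (\<forall>i\<in>{1..p}. (\<Sum>j=1..r. z i j) = 1)"

definition cols_one :: "nat \<Rightarrow> nat \<Rightarrow> mat \<Rightarrow> bool" where
  "cols_one p r z \<longleftrightarrow> (\<forall>j\<in>{1..r}. (\<Sum>i=1..p. z i j) = 1)"

definition row_select :: "nat \<Rightarrow> nat \<Rightarrow> mat \<Rightarrow> mat \<Rightarrow> bool" where
  "row_select p r cost z \<longleftrightarrow>
     (\<forall>i\<in>{1..p}. \<exists>j\<in>{1..r}. (\<forall>j'\<in>{1..r}. cost i j \<le> cost i j') \<and>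
        (\<forall>j'\<in>{1..r}. z i j' = (if j' = j then 1 else 0)))"

definition col_select :: "nat \<Rightarrow> nat \<Rightarrow> mat \<Rightarrow> mat \<Rightarrow> bool" where
  "col_select p r cost z \<longleftrightarrow>
     (\<forall>j\<in>{1..r}. \<exists>i\<in>{1..p}. (\<forall>i'\<in>{1..p}. cost i j \<le> cost i' j) \<and>
        (\<forall>i'\<in>{1..p}. z i' j = (if i' = i then 1 else 0)))"

definition BLP1_feasible :: "nat \<Rightarrow> nat \<Rightarrow> mat \<Rightarrow> mat \<Rightarrow> bool" where
  "BLP1_feasible m n x y \<longleftrightarrow> rows_one m n x \<and> cols_one m n y \<and> inbox m n x \<and> inbox m n y"

definition BQAP1_feasible :: "nat \<Rightarrow> nat \<Rightarrow> mat \<Rightarrow> mat \<Rightarrow> bool" where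
  "BQAP1_feasible m n x y \<longleftrightarrow> rows_one m n x \<and> cols_one m n y \<and> is01 m n x \<and> is01 m n y"

definition f1 :: "arr4 \<Rightarrow> mat \<Rightarrow> mat \<Rightarrow> nat \<Rightarrow> nat \<Rightarrow> mat \<Rightarrow> mat \<Rightarrow> real" where
  "f1 Q c d m n x y =
     (\<Sum>i=1..m. \<Sum>j=1..n. \<Sum>k=1..m. \<Sum>l=1..n. Q i j k l * x i j * y k l)
     + (\<Sum>i=1..m. \<Sum>j=1..n. c i j * x i j) + (\<Sum>i=1..m. \<Sum>j=1..n. d i j * y i j)"

definition RxOy1 :: "arr4 \<Rightarrow> mat \<Rightarrow> mat \<Rightarrow> nat \<Rightarrow> nat \<Rightarrow> mat \<Rightarrow> mat \<Rightarrow> mat \<Rightarrow> mat \<Rightarrow> bool" where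
  "RxOy1 Q c d m n x y xs ys \<longleftrightarrow>
     row_select m n (\<lambda>i j. c i j + (\<Sum>k=1..m. \<Sum>l=1..n. Q i j k l * y k l)) xs \<and>
     col_select m n (\<lambda>i j. d i j + (\<Sum>k=1..m. \<Sum>l=1..n. Q k l i j * xs k l)) ys"

definition RyOx1 :: "arr4 \<Rightarrow> mat \<Rightarrow> mat \<Rightarrow> nat \<Rightarrow> nat \<Rightarrow> mat \<Rightarrow> mat \<Rightarrow> mat \<Rightarrow> mat \<Rightarrow> bool" where
  "RyOx1 Q c d m n x y xs ys \<longleftrightarrow>
     col_select m n (\<lambda>i j. d i j + (\<Sum>k=1..m. \<Sum>l=1..n. Q k l i j * x k l)) ys \<and>
     row_select m n (\<lambda>i j. c i j + (\<Sum>k=1..m. \<Sum>l=1..n. Q i j k l * ys k l)) xs"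

definition BLP2_feasible :: "nat \<Rightarrow> nat \<Rightarrow> mat \<Rightarrow> mat \<Rightarrow> bool" where
  "BLP2_feasible m n x y \<longleftrightarrow> rows_one m m x \<and> cols_one n n y \<and> inbox m m x \<and> inbox n n y"

definition BQAP2_feasible :: "nat \<Rightarrow> nat \<Rightarrow> mat \<Rightarrow> mat \<Rightarrow> bool" where
  "BQAP2_feasible m n x y \<longleftrightarrow> rows_one m m x \<and> cols_one n n y \<and> is01 m m x \<and> is01 n n y"

definition f2 :: "arr4 \<Rightarrow> mat \<Rightarrow> mat \<Rightarrow> nat \<Rightarrow> nat \<Rightarrow> mat \<Rightarrow> mat \<Rightarrow> real" where
  "f2 Q c d m n x y =
     (\<Sum>i=1..m. \<Sum>j=1..m. \<Sum>k=1..n. \<Sum>l=1..n. Q i j k l * x i j * y k l)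
     + (\<Sum>i=1..m. \<Sum>j=1..m. c i j * x i j) + (\<Sum>i=1..n. \<Sum>j=1..n. d i j * y i j)"

definition RxOy2 :: "arr4 \<Rightarrow> mat \<Rightarrow> mat \<Rightarrow> nat \<Rightarrow> nat \<Rightarrow> mat \<Rightarrow> mat \<Rightarrow> mat \<Rightarrow> mat \<Rightarrow> bool" where
  "RxOy2 Q c d m n x y xs ys \<longleftrightarrow>
     row_select m m (\<lambda>i j. c i j + (\<Sum>k=1..n. \<Sum>l=1..n. Q i j k l * y k l)) xs \<and>
     col_select n n (\<lambda>k l. d k l + (\<Sum>i=1..m. \<Sum>j=1..m. Q i j k l * xs i j)) ys"

definition RyOx2 :: "arr4 \<Rightarrow> mat \<Rightarrow> mat \<Rightarrow> nat \<Rightarrow> nat \<Rightarrow> mat \<Rightarrow> mat \<Rightarrow> mat \<Rightarrow> mat \<Rightarrow> bool" where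
  "RyOx2 Q c d m n x y xs ys \<longleftrightarrow>
     col_select n n (\<lambda>k l. d k l + (\<Sum>i=1..m. \<Sum>j=1..m. Q i j k l * x i j)) ys \<and>
     row_select m m (\<lambda>i j. c i j + (\<Sum>k=1..n. \<Sum>l=1..n. Q i j k l * ys k l)) xs"

end

theory Submission
  imports Defs
begin

text \<open>For fixed y the objective is affine in x with the cost c i j + \<Sum>k l. Q i j k l * y k l,
  and symmetrically in y. Over the constraints of the relaxation, a linear function separates
  into one simplex per row (resp. column), on which it is minimised by the vertex at a
  cheapest coordinate. So replacing x by its rounding, and then y by its rounding (or in the
  other order), never increases the objective and yields a 0-1 assignment.\<close>

lemma sum_one_hot_le_convex_comb:
  fixes cost z w :: "nat \<Rightarrow> real"
  assumes j: "j \<in> {1..r}" and min: "\<forall>j'\<in>{1..r}. cost j \<le> cost j'"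
    and z: "\<forall>j'\<in>{1..r}. z j' = (if j' = j then 1 else 0)"
    and w_nonneg: "\<forall>j'\<in>{1..r}. 0 \<le> w j'" and w_sum: "(\<Sum>j'=1..r. w j') = 1"
  shows "(\<Sum>j'=1..r. cost j' * z j') \<le> (\<Sum>j'=1..r. cost j' * w j')"
proof -
  have "(\<Sum>j'=1..r. cost j' * z j') = (\<Sum>j'=1..r. if j' = j then cost j else 0)"
    by (rule sum.cong) (auto simp: z)
  also have "\<dots> = (\<Sum>j'=1..r. cost j * w j')"
    using j w_sum by (simp add: sum_distrib_left[symmetric])
  also have "\<dots> \<le> (\<Sum>j'=1..r. cost j' * w j')"
    by (rule sum_mono) (use min w_nonneg in \<open>auto intro: mult_right_mono\<close>)
  finally show ?thesis .
qed

lemma row_select_rows_one: "row_select p r cost z \<Longrightarrow> rows_one p r z"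
  unfolding row_select_def rows_one_def
proof
  fix i assume "\<forall>i\<in>{1..p}. \<exists>j\<in>{1..r}. (\<forall>j'\<in>{1..r}. cost i j \<le> cost i j') \<and>
                  (\<forall>j'\<in>{1..r}. z i j' = (if j' = j then 1 else 0))" and "i \<in> {1..p}"
  then obtain j where j: "j \<in> {1..r}" "\<forall>j'\<in>{1..r}. z i j' = (if j' = j then 1 else 0)"
    by blast
  have "(\<Sum>j'=1..r. z i j') = (\<Sum>j'=1..r. if j' = j then 1 else 0)"
    by (rule sum.cong) (auto simp: j)
  with j show "(\<Sum>j'=1..r. z i j') = 1" by simp
qed

lemma row_select_is01: "row_select p r cost z \<Longrightarrow> is01 p r z"
  unfolding row_select_def is01_def by fastforce

lemma row_select_cost_le:
  assumes "row_select p r cost z" "rows_one p r w" "inbox p r w"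
  shows "(\<Sum>i=1..p. \<Sum>j=1..r. cost i j * z i j) \<le> (\<Sum>i=1..p. \<Sum>j=1..r. cost i j * w i j)"
proof (rule sum_mono)
  fix i assume i: "i \<in> {1..p}"
  then obtain j where "j \<in> {1..r}" "\<forall>j'\<in>{1..r}. cost i j \<le> cost i j'"
    "\<forall>j'\<in>{1..r}. z i j' = (if j' = j then 1 else 0)"
    using assms(1) unfolding row_select_def by blast
  with assms(2,3) i show "(\<Sum>j=1..r. cost i j * z i j) \<le> (\<Sum>j=1..r. cost i j * w i j)"
    unfolding rows_one_def inbox_def by (intro sum_one_hot_le_convex_comb[where j=j]) auto
qed

lemma col_select_iff_row_select_transpose:
  "col_select p r cost z \<longleftrightarrow> row_select r p (\<lambda>j i. cost i j) (\<lambda>j i. z i j)"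
  unfolding col_select_def row_select_def ..

lemma cols_one_iff_rows_one_transpose: "cols_one p r z \<longleftrightarrow> rows_one r p (\<lambda>j i. z i j)"
  unfolding cols_one_def rows_one_def ..

lemma is01_transpose: "is01 r p (\<lambda>j i. z i j) \<longleftrightarrow> is01 p r z"
  unfolding is01_def by blast

lemma inbox_transpose: "inbox r p (\<lambda>j i. z i j) \<longleftrightarrow> inbox p r z"
  unfolding inbox_def by blast

lemma col_select_cols_one: "col_select p r cost z \<Longrightarrow> cols_one p r z"
  by (simp add: col_select_iff_row_select_transpose cols_one_iff_rows_one_transpose
      row_select_rows_one)

lemma col_select_is01: "col_select p r cost z \<Longrightarrow> is01 p r z"
  by (metis col_select_iff_row_select_transpose is01_transpose row_select_is01)

lemma col_select_cost_le:
  assumes "col_select p r cost z" "cols_one p r w" "inbox p r w"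
  shows "(\<Sum>i=1..p. \<Sum>j=1..r. cost i j * z i j) \<le> (\<Sum>i=1..p. \<Sum>j=1..r. cost i j * w i j)"
proof -
  have "row_select r p (\<lambda>j i. cost i j) (\<lambda>j i. z i j)" "rows_one r p (\<lambda>j i. w i j)"
    "inbox r p (\<lambda>j i. w i j)"
    using assms col_select_iff_row_select_transpose cols_one_iff_rows_one_transpose
      inbox_transpose by blast+
  then have "(\<Sum>j=1..r. \<Sum>i=1..p. cost i j * z i j) \<le> (\<Sum>j=1..r. \<Sum>i=1..p. cost i j * w i j)"
    by (rule row_select_cost_le)
  then show ?thesis by (simp only: sum.swap[of _ "{1..r}" "{1..p}"])
qed

definition bilinear_objective ::
    "nat \<Rightarrow> nat \<Rightarrow> nat \<Rightarrow> nat \<Rightarrow> arr4 \<Rightarrow> mat \<Rightarrow> mat \<Rightarrow> mat \<Rightarrow> mat \<Rightarrow> real" where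
  "bilinear_objective a b e g Q c d x y =
     (\<Sum>i=1..a. \<Sum>j=1..b. \<Sum>k=1..e. \<Sum>l=1..g. Q i j k l * x i j * y k l)
     + (\<Sum>i=1..a. \<Sum>j=1..b. c i j * x i j) + (\<Sum>i=1..e. \<Sum>j=1..g. d i j * y i j)"

lemma f1_eq_bilinear_objective: "f1 Q c d m n x y = bilinear_objective m n m n Q c d x y"
  unfolding f1_def bilinear_objective_def ..

lemma f2_eq_bilinear_objective: "f2 Q c d m n x y = bilinear_objective m m n n Q c d x y"
  unfolding f2_def bilinear_objective_def ..

lemma bilinear_objective_linear_in_x:
  "bilinear_objective a b e g Q c d x y =
     (\<Sum>i=1..a. \<Sum>j=1..b. (c i j + (\<Sum>k=1..e. \<Sum>l=1..g. Q i j k l * y k l)) * x i j)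
     + (\<Sum>i=1..e. \<Sum>j=1..g. d i j * y i j)"
  unfolding bilinear_objective_def
  by (simp add: algebra_simps sum.distrib sum_distrib_left sum_distrib_right)

lemma bilinear_objective_linear_in_y:
  "bilinear_objective a b e g Q c d x y = (\<Sum>i=1..a. \<Sum>j=1..b. c i j * x i j) +
     (\<Sum>k=1..e. \<Sum>l=1..g. (d k l + (\<Sum>i=1..a. \<Sum>j=1..b. Q i j k l * x i j)) * y k l)"
proof -
  have "(\<Sum>i=1..a. \<Sum>j=1..b. \<Sum>k=1..e. \<Sum>l=1..g. Q i j k l * x i j * y k l)
      = (\<Sum>k=1..e. \<Sum>l=1..g. \<Sum>i=1..a. \<Sum>j=1..b. Q i j k l * x i j * y k l)"
    by (simp only: sum.swap[of _ "{1..b}" "{1..e}"] sum.swap[of _ "{1..a}" "{1..e}"]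
        sum.swap[of _ "{1..b}" "{1..g}"] sum.swap[of _ "{1..a}" "{1..g}"])
  then show ?thesis
    unfolding bilinear_objective_def
    by (simp add: algebra_simps sum.distrib sum_distrib_left sum_distrib_right)
qed

lemma row_rounding_le:
  assumes "row_select a b (\<lambda>i j. c i j + (\<Sum>k=1..e. \<Sum>l=1..g. Q i j k l * y k l)) xs"
    and "rows_one a b x" "inbox a b x"
  shows "bilinear_objective a b e g Q c d xs y \<le> bilinear_objective a b e g Q c d x y"
  using row_select_cost_le[OF assms] by (simp add: bilinear_objective_linear_in_x)

lemma col_rounding_le:
  assumes "col_select e g (\<lambda>k l. d k l + (\<Sum>i=1..a. \<Sum>j=1..b. Q i j k l * x i j)) ys"
    and "cols_one e g y" "inbox e g y"
  shows "bilinear_objective a b e g Q c d x ys \<le> bilinear_objective a b e g Q c d x y"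
  using col_select_cost_le[OF assms] by (simp add: bilinear_objective_linear_in_y)

lemma alternating_rounding:
  assumes x: "rows_one a b x" "inbox a b x" and y: "cols_one e g y" "inbox e g y"
    and rounding:
      "(row_select a b (\<lambda>i j. c i j + (\<Sum>k=1..e. \<Sum>l=1..g. Q i j k l * y k l)) xs \<and>
        col_select e g (\<lambda>k l. d k l + (\<Sum>i=1..a. \<Sum>j=1..b. Q i j k l * xs i j)) ys)
     \<or> (col_select e g (\<lambda>k l. d k l + (\<Sum>i=1..a. \<Sum>j=1..b. Q i j k l * x i j)) ys \<and>
        row_select a b (\<lambda>i j. c i j + (\<Sum>k=1..e. \<Sum>l=1..g. Q i j k l * ys k l)) xs)"
  shows "rows_one a b xs \<and> cols_one e g ys \<and> is01 a b xs \<and> is01 e g ys \<and>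
         bilinear_objective a b e g Q c d xs ys \<le> bilinear_objective a b e g Q c d x y"
  using rounding
proof
  assume xs: "row_select a b (\<lambda>i j. c i j + (\<Sum>k=1..e. \<Sum>l=1..g. Q i j k l * y k l)) xs \<and>
              col_select e g (\<lambda>k l. d k l + (\<Sum>i=1..a. \<Sum>j=1..b. Q i j k l * xs i j)) ys"
  have "bilinear_objective a b e g Q c d xs ys \<le> bilinear_objective a b e g Q c d xs y"
    using xs y by (intro col_rounding_le) auto
  also have "\<dots> \<le> bilinear_objective a b e g Q c d x y"
    using xs x by (intro row_rounding_le) auto
  finally show ?thesis
    using xs row_select_rows_one row_select_is01 col_select_cols_one col_select_is01 by blast
next
  assume ys: "col_select e g (\<lambda>k l. d k l + (\<Sum>i=1..a. \<Sum>j=1..b. Q i j k l * x i j)) ys \<and>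
              row_select a b (\<lambda>i j. c i j + (\<Sum>k=1..e. \<Sum>l=1..g. Q i j k l * ys k l)) xs"
  have "bilinear_objective a b e g Q c d xs ys \<le> bilinear_objective a b e g Q c d x ys"
    using ys x by (intro row_rounding_le) auto
  also have "\<dots> \<le> bilinear_objective a b e g Q c d x y"
    using ys y by (intro col_rounding_le) auto
  finally show ?thesis
    using ys row_select_rows_one row_select_is01 col_select_cols_one col_select_is01 by blast
qed

theorem theorem7:
  shows "(\<forall>(Q::arr4) (c::mat) (d::mat) (m::nat) (n::nat) (x::mat) (y::mat) (xs::mat) (ys::mat).
            BLP1_feasible m n x y \<longrightarrow>
            (RxOy1 Q c d m n x y xs ys \<or> RyOx1 Q c d m n x y xs ys) \<longrightarrow>
            BQAP1_feasible m n xs ys \<and> f1 Q c d m n xs ys \<le> f1 Q c d m n x y)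
       \<and> (\<forall>(Q::arr4) (c::mat) (d::mat) (m::nat) (n::nat) (x::mat) (y::mat) (xs::mat) (ys::mat).
            BLP2_feasible m n x y \<longrightarrow>
            (RxOy2 Q c d m n x y xs ys \<or> RyOx2 Q c d m n x y xs ys) \<longrightarrow>
            BQAP2_feasible m n xs ys \<and> f2 Q c d m n xs ys \<le> f2 Q c d m n x y)"
proof (rule conjI; intro allI impI)
  fix Q c d m n x y xs ys
  assume "BLP1_feasible m n x y" "RxOy1 Q c d m n x y xs ys \<or> RyOx1 Q c d m n x y xs ys"
  then show "BQAP1_feasible m n xs ys \<and> f1 Q c d m n xs ys \<le> f1 Q c d m n x y"
    using alternating_rounding[of m n x m n y c Q xs d ys]
    unfolding BLP1_feasible_def RxOy1_def RyOx1_def BQAP1_feasible_def f1_eq_bilinear_objective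
    by blast
next
  fix Q c d m n x y xs ys
  assume "BLP2_feasible m n x y" "RxOy2 Q c d m n x y xs ys \<or> RyOx2 Q c d m n x y xs ys"
  then show "BQAP2_feasible m n xs ys \<and> f2 Q c d m n xs ys \<le> f2 Q c d m n x y"
    using alternating_rounding[of m m x n n y c Q xs d ys]
    unfolding BLP2_feasible_def RxOy2_def RyOx2_def BQAP2_feasible_def f2_eq_bilinear_objective
    by blast
qed

end
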